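(* There is a $D$-configuration $(x_p,l_m)$ in $L$ and a set $S$ of 16 of its 26 roots whose graph (incidence subgraph) is the $M_{666}$ tree, such that $\operatorname{rad}(S)=\operatorname{rad}(\{x_p\}\cup\{l_m\})$ up to units; in particular the group $R_1$ generated by the $\omega$-reflections in the 16 roots of $S$ equals the group $R_2$ generated by the $\omega$-reflections in all 26 roots.
   Context: Let $\omega=e^{2\pi i/3}$, $\mathcal E=\mathbb Z[\omega]$, $\theta=\omega-\bar\omega=\sqrt{-3}$; Hermitian forms are conjugate-linear in the first variable. $\Lambda\subset\mathcal E^{12}$ is the complex Leech lattice (vectors $(m+\theta c_i+3z_i)_i$ with $m\in\{0,\pm1\}$, $c\in\{0,\pm1\}^{12}$ reducing mod $\theta$ to a word of the ternary Golay code, $z_i\in\mathcal E$, $\sum z_i\equiv m\pmod\theta$; form $-\frac13\sum\bar u_iv_i$). $H=\mathcal E^2$ with form $u^*\begin{pmatrix}0&\bar\theta\\ \theta&0\end{pmatrix}v$; $L=\Lambda\oplus H$. A root is a vector of $L$ of norm $-3$; the $\omega$-reflection in $r$ is $\phi_r(v)=v-(1-\omega)r\langle r,v\rangle/|r|^2$. A $D$-configuration is a family of roots $x_p$ ($p$ a point of $P^2(\mathbb F_3)$), $l_m$ ($m$ a line) with $\langle x_p,x_{p'}\rangle=0$ ($p\neq p'$), $\langle l_m,l_{m'}\rangle=0$ ($m\neq m'$), $\langle x_p,l_m\rangle=-\omega\theta$ if $p\in m$ and $0$ otherwise; its graph is the incidence graph of $P^2(\mathbb F_3)$. The $M_{666}$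 tree is the tree with 16 vertices consisting of a central vertex and three arms, each a path of 5 vertices attached to the center. For a set $\Phi$ of roots, $\Phi^{(0)}=\Phi$, $\Phi^{(n)}=\{\phi_a(b):a,b\in\Phi^{(n-1)}\}$, $\operatorname{rad}(\Phi)=\bigcup_n\Phi^{(n)}$. *)

theory Defs
  imports Complex_Main "HOL-Algebra.Bij" "HOL-Algebra.Generated_Groups"
begin

definition omega :: complex where
  "omega = Complex (-1/2) (sqrt 3 / 2)"

definition theta :: complex where
  "theta = omega - cnj omega"              (* = sqrt(-3) *)

definition Eis :: "complex set" where
  "Eis = {of_int a + of_int b * omega | a b. True}"

definition Eis_units :: "complex set" where
  "Eis_units = {u \<in> Eis. \<exists>v\<in>Eis. u * v = 1}"

definition cong_theta :: "complex \<Rightarrow> complex \<Rightarrow> bool" where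
  "cong_theta a b \<longleftrightarrow> (\<exists>e\<in>Eis. a - b = theta * e)"

definition golay_gen :: "nat \<Rightarrow> nat \<Rightarrow> int" where
  "golay_gen j i = [[1,0,0,0,0,0,0,1,1,1,1,1],
                    [0,1,0,0,0,0,1,0,1,2,2,1],
                    [0,0,1,0,0,0,1,1,0,1,2,2],
                    [0,0,0,1,0,0,1,2,1,0,1,2],
                    [0,0,0,0,1,0,1,2,2,1,0,1],
                    [0,0,0,0,0,1,1,1,2,2,1,0]] ! j ! i"

definition golay_word :: "(nat \<Rightarrow> int) \<Rightarrow> bool" where
  "golay_word c \<longleftrightarrow> (\<exists>a :: nat \<Rightarrow> int. \<forall>i<12. (c i - (\<Sum>j<6. a j * golay_gen j i)) mod 3 = 0)"

section \<open>The lattice L = Lambda + H, vectors indexed by 0..13 (coordinates 12, 13 are H)\<close>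

type_synonym vec = "nat \<Rightarrow> complex"

definition leech :: "vec set" where
  "leech = {v. \<exists>(m::int) (c::nat \<Rightarrow> int) (z::nat \<Rightarrow> complex).
      m \<in> {-1,0,1} \<and> (\<forall>i<12. c i \<in> {-1,0,1}) \<and> golay_word c \<and>
      (\<forall>i<12. z i \<in> Eis) \<and> cong_theta (\<Sum>i<12. z i) (of_int m) \<and>
      (\<forall>i<12. v i = of_int m + theta * of_int (c i) + 3 * z i)}"

definition Lat :: "vec set" where
  "Lat = {v. (\<exists>w\<in>leech. \<forall>i<12. v i = w i) \<and> v 12 \<in> Eis \<and> v 13 \<in> Eis \<and>
             (\<forall>i\<ge>14. v i = 0)}"

definition herm :: "vec \<Rightarrow> vec \<Rightarrow> complex" where
  "herm u v = - (1/3) * (\<Sum>i<12. cnj (u i) * v i)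
              + cnj (u 12) * cnj theta * v 13 + cnj (u 13) * theta * v 12"

definition is_root :: "vec \<Rightarrow> bool" where
  "is_root r \<longleftrightarrow> r \<in> Lat \<and> herm r r = -3"

definition refl :: "vec \<Rightarrow> vec \<Rightarrow> vec" where
  "refl r v = (\<lambda>i. v i - (1 - omega) * herm r v / herm r r * r i)"

fun rad_step :: "vec set \<Rightarrow> nat \<Rightarrow> vec set" where
  "rad_step \<Phi> 0 = \<Phi>"
| "rad_step \<Phi> (Suc n) = {refl a b | a b. a \<in> rad_step \<Phi> n \<and> b \<in> rad_step \<Phi> n}"

definition rad :: "vec set \<Rightarrow> vec set" where
  "rad \<Phi> = (\<Union>n. rad_step \<Phi> n)"

definition eq_up_to_units :: "vec set \<Rightarrow> vec set \<Rightarrow> bool" where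
  "eq_up_to_units A B \<longleftrightarrow>
     (\<forall>a\<in>A. \<exists>u\<in>Eis_units. \<exists>b\<in>B. a = (\<lambda>i. u * b i)) \<and>
     (\<forall>b\<in>B. \<exists>u\<in>Eis_units. \<exists>a\<in>A. b = (\<lambda>i. u * a i))"

definition refl_group :: "vec set \<Rightarrow> (vec \<Rightarrow> vec) set" where
  "refl_group \<Phi> = generate (BijGroup UNIV) (refl ` \<Phi>)"

text \<open>Points (and lines) are normalised triples over {0,1,2} whose first nonzero entry is 1.\<close>
definition P2 :: "(int \<times> int \<times> int) set" where
  "P2 = {(a,b,c). a \<in> {0,1,2} \<and> b \<in> {0,1,2} \<and> c \<in> {0,1,2} \<and>
           (a = 1 \<or> (a = 0 \<and> b = 1) \<or> (a = 0 \<and> b = 0 \<and> c = 1))}"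

definition incident :: "int \<times> int \<times> int \<Rightarrow> int \<times> int \<times> int \<Rightarrow> bool" where
  "incident p m \<longleftrightarrow> (case p of (a,b,c) \<Rightarrow> case m of (d,e,f) \<Rightarrow> (a*d + b*e + c*f) mod 3 = 0)"

definition D_config :: "(int \<times> int \<times> int \<Rightarrow> vec) \<Rightarrow> (int \<times> int \<times> int \<Rightarrow> vec) \<Rightarrow> bool" where
  "D_config x l \<longleftrightarrow>
     (\<forall>p\<in>P2. is_root (x p)) \<and> (\<forall>m\<in>P2. is_root (l m)) \<and>
     (\<forall>p\<in>P2. \<forall>p'\<in>P2. p \<noteq> p' \<longrightarrow> herm (x p) (x p') = 0) \<and>
     (\<forall>m\<in>P2. \<forall>m'\<in>P2. m \<noteq> m' \<longrightarrow> herm (l m) (l m') = 0) \<and>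
     (\<forall>p\<in>P2. \<forall>m\<in>P2. herm (x p) (l m) = (if incident p m then - omega * theta else 0))"

text \<open>The 26 vertices of the configuration: Inl p for x_p, Inr m for l_m.\<close>
definition D_vertices :: "((int \<times> int \<times> int) + (int \<times> int \<times> int)) set" where
  "D_vertices = Inl ` P2 \<union> Inr ` P2"

fun D_root :: "(int \<times> int \<times> int \<Rightarrow> vec) \<Rightarrow> (int \<times> int \<times> int \<Rightarrow> vec) \<Rightarrow>
      (int \<times> int \<times> int) + (int \<times> int \<times> int) \<Rightarrow> vec" where
  "D_root x l (Inl p) = x p"
| "D_root x l (Inr m) = l m"

fun inc_adj :: "(int \<times> int \<times> int) + (int \<times> int \<times> int) \<Rightarrow> (int \<times> int \<times> int) + (int \<times> int \<times> int) \<Rightarrow> bool" where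
  "inc_adj (Inl p) (Inr m) = incident p m"
| "inc_adj (Inr m) (Inl p) = incident p m"
| "inc_adj _ _ = False"

definition m666_edges :: "(nat \<times> nat) set" where
  "m666_edges = {(0,1),(1,2),(2,3),(3,4),(4,5),
                 (0,6),(6,7),(7,8),(8,9),(9,10),
                 (0,11),(11,12),(12,13),(13,14),(14,15)}"

definition m666_adj :: "nat \<Rightarrow> nat \<Rightarrow> bool" where
  "m666_adj i j \<longleftrightarrow> (i,j) \<in> m666_edges \<or> (j,i) \<in> m666_edges"

end

(*
  The 26 roots are given by explicit coordinates over Z[omega]; that they lie in L, have norm -3
  and have the inner products of a D-configuration is a finite computation.
  Multiplying a root by a unit does not change its reflection, and
  phi_(phi_a v) = phi_a phi_v phi_a^(-1). Hence every vector obtained from S by reflections and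
  unit multiples lies in rad(S) up to units, and its reflection lies in R_1. Explicit chains of
  reflections in roots of S, and in roots obtained earlier, produce each of the ten roots outside
  S up to a unit. So all 26 roots arise from S in this way, which gives both equalities.
*)
theory Submission
  imports Defs
begin

section \<open>Eisenstein integers as pairs of integers\<close>

type_synonym eint = "int \<times> int"

definition eis :: "eint \<Rightarrow> complex" where
  "eis p = of_int (fst p) + of_int (snd p) * omega"

fun eadd :: "eint \<Rightarrow> eint \<Rightarrow> eint" where "eadd (a, b) (c, d) = (a + c, b + d)"
fun esub :: "eint \<Rightarrow> eint \<Rightarrow> eint" where "esub (a, b) (c, d) = (a - c, b - d)"
fun emult :: "eint \<Rightarrow> eint \<Rightarrow> eint" where "emult (a, b) (c, d) = (a*c - b*d, a*d + b*c - b*d)"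
fun ecnj :: "eint \<Rightarrow> eint" where "ecnj (a, b) = (a - b, - b)"

lemma omega_squared: "omega * omega = -1 - omega"
  by (simp add: omega_def complex_eq_iff field_simps)

lemma cnj_omega: "cnj omega = -1 - omega"
  by (simp add: omega_def complex_eq_iff)

lemma theta_eis: "theta = eis (1, 2)"
  by (simp add: theta_def cnj_omega eis_def)

lemma eis_add: "eis p + eis q = eis (eadd p q)"
  by (cases p; cases q) (simp add: eis_def algebra_simps)

lemma eis_diff: "eis p - eis q = eis (esub p q)"
  by (cases p; cases q) (simp add: eis_def algebra_simps)

lemma eis_mult: "eis p * eis q = eis (emult p q)"
proof (cases p; cases q)
  fix a b c d assume pq: "p = (a, b)" "q = (c, d)"
  have "eis p * eis q = of_int (a*c) + of_int (a*d + b*c) * omega + of_int (b*d) * (omega * omega)"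
    by (simp add: pq eis_def algebra_simps)
  also have "\<dots> = eis (emult p q)"
    by (simp add: pq eis_def omega_squared algebra_simps)
  finally show ?thesis .
qed

lemma eis_cnj: "cnj (eis p) = eis (ecnj p)"
  by (cases p) (simp add: eis_def cnj_omega algebra_simps)

lemma eis_scale: "eis (k * a, k * b) = of_int k * eis (a, b)"
  by (simp add: eis_def algebra_simps)

lemma eis_in_Eis: "eis p \<in> Eis"
  by (auto simp: Eis_def eis_def)

definition unit_list :: "eint list" where
  "unit_list = [(1,0), (0,1), (-1,-1), (-1,0), (0,-1), (1,1)]"

definition sixth_roots :: "complex set" where
  "sixth_roots = eis ` set unit_list"

lemma sixth_roots_mult:
  assumes "u \<in> sixth_roots" "v \<in> sixth_roots"
  shows "u * v \<in> sixth_roots"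
proof -
  obtain p q where pq: "p \<in> set unit_list" "q \<in> set unit_list" "u = eis p" "v = eis q"
    using assms by (auto simp: sixth_roots_def)
  have "\<forall>p\<in>set unit_list. \<forall>q\<in>set unit_list. emult p q \<in> set unit_list"
    by (simp add: unit_list_def)
  with pq show ?thesis
    by (simp add: sixth_roots_def eis_mult del: emult.simps)
qed

lemma sixth_roots_cnj:
  assumes "u \<in> sixth_roots"
  shows "cnj u \<in> sixth_roots"
proof -
  obtain p where p: "p \<in> set unit_list" "u = eis p"
    using assms by (auto simp: sixth_roots_def)
  have "\<forall>p\<in>set unit_list. ecnj p \<in> set unit_list"
    by (simp add: unit_list_def)
  with p show ?thesis
    by (simp add: sixth_roots_def eis_cnj del: ecnj.simps)
qed

lemma sixth_roots_norm:
  assumes "u \<in> sixth_roots"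
  shows "cnj u * u = 1"
proof -
  obtain p where p: "p \<in> set unit_list" "u = eis p"
    using assms by (auto simp: sixth_roots_def)
  have "\<forall>p\<in>set unit_list. emult (ecnj p) p = (1, 0)"
    by (simp add: unit_list_def)
  with p show ?thesis
    by (simp add: eis_cnj eis_mult del: ecnj.simps emult.simps) (simp add: eis_def)
qed

lemma one_sixth_root: "1 \<in> sixth_roots"
  and omega_sixth_root: "omega \<in> sixth_roots"
  by (force simp: sixth_roots_def unit_list_def eis_def)+

lemma sixth_roots_Eis_units: "u \<in> sixth_roots \<Longrightarrow> u \<in> Eis_units"
  using sixth_roots_norm[of u] sixth_roots_cnj[of u]
  by (auto simp: Eis_units_def sixth_roots_def eis_in_Eis mult.commute)

section \<open>The Hermitian form and omega-reflections\<close>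

lemma herm_scale: "herm (\<lambda>i. c * u i) (\<lambda>i. d * v i) = cnj c * d * herm u v"
proof -
  have "(\<Sum>i<12. cnj (c * u i) * (d * v i)) = cnj c * d * (\<Sum>i<12. cnj (u i) * v i)"
    by (simp add: sum_distrib_left algebra_simps)
  then show ?thesis
    unfolding herm_def by (simp add: algebra_simps)
qed

lemma herm_diff_right: "herm u (\<lambda>i. v i - c * w i) = herm u v - c * herm u w"
proof -
  have "(\<Sum>i<12. cnj (u i) * (v i - c * w i)) = (\<Sum>i<12. cnj (u i) * v i) - c * (\<Sum>i<12. cnj (u i) * w i)"
    by (simp add: sum_distrib_left algebra_simps sum_subtractf)
  then show ?thesis
    unfolding herm_def by (simp add: algebra_simps)
qed

lemma herm_diff_left: "herm (\<lambda>i. v i - c * w i) u = herm v u - cnj c * herm w u"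
proof -
  have "(\<Sum>i<12. cnj (v i - c * w i) * u i) = (\<Sum>i<12. cnj (v i) * u i) - cnj c * (\<Sum>i<12. cnj (w i) * u i)"
    by (simp add: sum_distrib_left algebra_simps sum_subtractf)
  then show ?thesis
    unfolding herm_def by (simp add: algebra_simps)
qed

lemma herm_commute: "herm u v = cnj (herm v u)"
proof -
  have "cnj (\<Sum>i<12. cnj (v i) * u i) = (\<Sum>i<12. cnj (u i) * v i)"
    by (simp add: mult.commute)
  moreover have "cnj theta = - theta"
    by (simp add: theta_def)
  ultimately show ?thesis
    unfolding herm_def by (simp add: algebra_simps)
qed

lemma refl_unit_scale:
  assumes c: "cnj c * c = 1"
  shows "refl (\<lambda>i. c * a i) (\<lambda>i. d * b i) = (\<lambda>i. d * refl a b i)"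
proof
  fix i
  have norm: "herm (\<lambda>i. c * a i) (\<lambda>i. c * a i) = herm a a"
    using herm_scale[of c a c a] c by simp
  have "(1 - omega) * (cnj c * d * herm a b) / herm a a * (c * a i) =
        d * ((1 - omega) * herm a b / herm a a * a i) * (cnj c * c)"
    by (simp add: algebra_simps)
  also have "\<dots> = d * ((1 - omega) * herm a b / herm a a * a i)"
    using c by simp
  finally have e: "(1 - omega) * (cnj c * d * herm a b) / herm a a * (c * a i) =
        d * ((1 - omega) * herm a b / herm a a * a i)" .
  show "refl (\<lambda>i. c * a i) (\<lambda>i. d * b i) i = d * refl a b i"
    unfolding refl_def norm herm_scale[of c a d b] e by (simp add: right_diff_distrib)
qed

lemma refl_unit_mirror:
  assumes "cnj c * c = 1"
  shows "refl (\<lambda>i. c * a i) = refl a"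
proof
  fix b
  have "refl (\<lambda>i. c * a i) (\<lambda>i. 1 * b i) = (\<lambda>i. 1 * refl a b i)"
    by (rule refl_unit_scale[OF assms])
  then show "refl (\<lambda>i. c * a i) b = refl a b"
    by simp
qed

lemma refl_self: "refl a a = (if herm a a = 0 then a else (\<lambda>i. omega * a i))"
proof (cases "herm a a = 0")
  case False
  then have e: "(1 - omega) * herm a a / herm a a = 1 - omega"
    by simp
  show ?thesis
    using False unfolding refl_def e by (simp add: algebra_simps)
qed (simp add: refl_def)

lemma refl_diff: "refl a (\<lambda>i. x i - c * y i) = (\<lambda>i. refl a x i - c * refl a y i)"
proof
  fix i
  define k where "k = (1 - omega) / herm a a"
  have refl_k: "refl a w i = w i - k * herm a w * a i" for w
    by (simp add: refl_def k_def)
  show "refl a (\<lambda>i. x i - c * y i) i = refl a x i - c * refl a y i"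
    unfolding refl_k herm_diff_right by (simp add: algebra_simps)
qed

lemma herm_refl_mirror:
  assumes "herm a a \<noteq> 0"
  shows "herm a (refl a v) = omega * herm a v"
proof -
  define k where "k = (1 - omega) / herm a a"
  have "refl a v = (\<lambda>i. v i - (k * herm a v) * a i)"
    by (simp add: refl_def k_def fun_eq_iff)
  then have "herm a (refl a v) = herm a v - (k * herm a v) * herm a a"
    by (simp add: herm_diff_right)
  also have "\<dots> = herm a v - (k * herm a a) * herm a v"
    by (simp add: algebra_simps)
  also have "k * herm a a = 1 - omega"
    using assms by (simp add: k_def)
  finally show ?thesis
    by (simp add: algebra_simps)
qed

lemma refl_cube:
  assumes "herm a a \<noteq> 0"
  shows "refl a (refl a (refl a v)) = v"
proof
  fix i
  define k where "k = (1 - omega) / herm a a"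
  have refl_k: "refl a w i = w i - k * herm a w * a i" for w
    by (simp add: refl_def k_def)
  have "refl a (refl a (refl a v)) i =
        v i - k * herm a v * a i - k * (omega * herm a v) * a i - k * (omega * (omega * herm a v)) * a i"
    unfolding refl_k herm_refl_mirror[OF assms] by simp
  also have "\<dots> = v i - k * herm a v * a i * (1 + omega + omega * omega)"
    by (simp add: algebra_simps)
  finally show "refl a (refl a (refl a v)) i = v i"
    by (simp add: omega_squared)
qed

lemma herm_self_real: "cnj (herm a a) = herm a a"
  using herm_commute[of a a] by simp

lemma refl_isometry:
  assumes N: "herm a a \<noteq> 0"
  shows "herm (refl a u) (refl a w) = herm u w"
proof -
  define t where "t = (1 - omega) / herm a a"
  have r: "refl a x = (\<lambda>i. x i - (t * herm a x) * a i)" for x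
    by (simp add: refl_def t_def fun_eq_iff)
  have "herm (refl a u) (refl a w) =
        herm u w - t * herm a w * cnj (herm a u) - cnj (t * herm a u) * (herm a w - t * herm a w * herm a a)"
    unfolding r herm_diff_left herm_diff_right herm_commute[of u a] by (simp add: algebra_simps)
  also have "\<dots> = herm u w - cnj (herm a u) * herm a w * (t + cnj t - cnj t * t * herm a a)"
    by (simp add: algebra_simps)
  also have "t + cnj t - cnj t * t * herm a a = 0"
  proof -
    have ct: "cnj t = (2 + omega) / herm a a"
      by (simp add: t_def herm_self_real cnj_omega)
    have "t + cnj t - cnj t * t * herm a a = ((1 - omega) + (2 + omega) - (2 + omega) * (1 - omega)) / herm a a"
      unfolding ct unfolding t_def using N by (simp add: field_simps)
    also have "(1 - omega) + (2 + omega) - (2 + omega) * (1 - omega) = 0"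
      by (simp add: algebra_simps omega_squared)
    finally show ?thesis
      by simp
  qed
  finally show ?thesis
    by simp
qed

text \<open>Since \<open>refl a\<close> has order three, \<open>refl a \<circ> refl a\<close> is its inverse, so this is the
  usual conjugation formula for reflections.\<close>
lemma refl_refl:
  assumes N: "herm a a \<noteq> 0"
  shows "refl (refl a v) = refl a \<circ> refl v \<circ> refl a \<circ> refl a"
proof
  fix w
  define w' where "w' = refl a (refl a w)"
  have w': "refl a w' = w"
    unfolding w'_def by (rule refl_cube[OF N])
  define c where "c = (1 - omega) * herm v w' / herm v v"
  have "refl v w' = (\<lambda>i. w' i - c * v i)"
    by (simp add: refl_def c_def fun_eq_iff)
  then have rhs: "(refl a \<circ> refl v \<circ> refl a \<circ> refl a) w = (\<lambda>i. w i - c * refl a v i)"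
    by (simp add: w'_def[symmetric] refl_diff w')
  have "herm (refl a v) (refl a v) = herm v v" "herm (refl a v) w = herm v w'"
    using refl_isometry[OF N, of v v] refl_isometry[OF N, of v w'] w' by simp_all
  then show "refl (refl a v) w = (refl a \<circ> refl v \<circ> refl a \<circ> refl a) w"
    unfolding rhs by (simp add: refl_def c_def fun_eq_iff)
qed

lemma bij_refl: "herm a a \<noteq> 0 \<Longrightarrow> bij (refl a)"
  by (rule o_bij[of "refl a \<circ> refl a"]) (simp_all add: fun_eq_iff refl_cube)

lemma carrier_BijGroup_UNIV: "carrier (BijGroup UNIV) = {f. bij f}"
  by (simp add: BijGroup_def Bij_def)

lemma generate_BijGroup_comp:
  assumes "f \<in> generate (BijGroup UNIV) A" "g \<in> generate (BijGroup UNIV) A" "bij f" "bij g"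
  shows "f \<circ> g \<in> generate (BijGroup UNIV) A"
proof -
  have "f \<otimes>\<^bsub>BijGroup UNIV\<^esub> g = f \<circ> g"
    using assms(3,4) by (simp add: BijGroup_def Bij_def compose_def fun_eq_iff)
  with generate.eng[OF assms(1,2)] show ?thesis
    by simp
qed

section \<open>Closure under reflections up to units\<close>

lemma rad_step_mono: "\<Phi> \<subseteq> \<Psi> \<Longrightarrow> rad_step \<Phi> n \<subseteq> rad_step \<Psi> n"
  by (induction n) auto

lemma rad_mono: "\<Phi> \<subseteq> \<Psi> \<Longrightarrow> rad \<Phi> \<subseteq> rad \<Psi>"
  unfolding rad_def by (intro SUP_mono) (auto dest: rad_step_mono)

text \<open>A vector survives to every later stage of \<open>rad\<close> up to a unit, because \<open>refl v v\<close> is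
  \<open>v\<close> or \<open>omega * v\<close>.\<close>
lemma rad_step_later:
  assumes "v \<in> rad_step \<Phi> n" "n \<le> m"
  shows "\<exists>u\<in>sixth_roots. (\<lambda>i. u * v i) \<in> rad_step \<Phi> m"
  using assms(2)
proof (induction m rule: dec_induct)
  case base
  then show ?case
    using assms(1) one_sixth_root by (intro bexI[of _ 1]) simp_all
next
  case (step m)
  then obtain u where u: "u \<in> sixth_roots" "(\<lambda>i. u * v i) \<in> rad_step \<Phi> m"
    by blast
  let ?w = "\<lambda>i. u * v i"
  have "refl ?w ?w \<in> rad_step \<Phi> (Suc m)"
    using u(2) by auto
  moreover have "refl ?w ?w = (\<lambda>i. u * v i) \<or> refl ?w ?w = (\<lambda>i. (omega * u) * v i)"
    by (simp add: refl_self mult.assoc)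
  moreover have "omega * u \<in> sixth_roots"
    using sixth_roots_mult[OF omega_sixth_root u(1)] .
  ultimately show ?case
    using u(1) by metis
qed

definition unit_rad :: "vec set \<Rightarrow> vec set" where
  "unit_rad \<Phi> = {v. \<exists>u\<in>sixth_roots. (\<lambda>i. u * v i) \<in> rad \<Phi>}"

lemma subset_unit_rad: "\<Phi> \<subseteq> unit_rad \<Phi>"
proof
  fix v assume "v \<in> \<Phi>"
  then have "(\<lambda>i. 1 * v i) \<in> rad \<Phi>"
    by (auto simp: rad_def intro!: exI[of _ 0])
  then show "v \<in> unit_rad \<Phi>"
    using one_sixth_root unfolding unit_rad_def by blast
qed

lemma unit_rad_scale:
  assumes "v \<in> unit_rad \<Phi>" "c \<in> sixth_roots"
  shows "(\<lambda>i. c * v i) \<in> unit_rad \<Phi>"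
proof -
  obtain u where u: "u \<in> sixth_roots" "(\<lambda>i. u * v i) \<in> rad \<Phi>"
    using assms(1) by (auto simp: unit_rad_def)
  have "(\<lambda>i. (u * cnj c) * (c * v i)) = (\<lambda>i. u * v i)"
    by (rule ext) (metis sixth_roots_norm[OF assms(2)] mult.assoc mult.left_neutral)
  moreover have "u * cnj c \<in> sixth_roots"
    using sixth_roots_mult sixth_roots_cnj u(1) assms(2) by blast
  ultimately show ?thesis
    using u(2) unfolding unit_rad_def by force
qed

lemma unit_rad_refl:
  assumes "a \<in> unit_rad \<Phi>" "b \<in> unit_rad \<Phi>"
  shows "refl a b \<in> unit_rad \<Phi>"
proof -
  obtain u1 n1 where u1: "u1 \<in> sixth_roots" "(\<lambda>i. u1 * a i) \<in> rad_step \<Phi> n1"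
    using assms(1) by (auto simp: unit_rad_def rad_def)
  obtain u2 n2 where u2: "u2 \<in> sixth_roots" "(\<lambda>i. u2 * b i) \<in> rad_step \<Phi> n2"
    using assms(2) by (auto simp: unit_rad_def rad_def)
  define n where "n = max n1 n2"
  obtain w1 where w1: "w1 \<in> sixth_roots" "(\<lambda>i. w1 * (u1 * a i)) \<in> rad_step \<Phi> n"
    using rad_step_later[OF u1(2), of n] by (auto simp: n_def)
  obtain w2 where w2: "w2 \<in> sixth_roots" "(\<lambda>i. w2 * (u2 * b i)) \<in> rad_step \<Phi> n"
    using rad_step_later[OF u2(2), of n] by (auto simp: n_def)
  define c d where "c = w1 * u1" and "d = w2 * u2"
  have c: "c \<in> sixth_roots" "(\<lambda>i. c * a i) \<in> rad_step \<Phi> n"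
    using w1 sixth_roots_mult[OF w1(1) u1(1)] by (simp_all add: c_def mult.assoc)
  have d: "d \<in> sixth_roots" "(\<lambda>i. d * b i) \<in> rad_step \<Phi> n"
    using w2 sixth_roots_mult[OF w2(1) u2(1)] by (simp_all add: d_def mult.assoc)
  have "refl (\<lambda>i. c * a i) (\<lambda>i. d * b i) \<in> rad_step \<Phi> (Suc n)"
    using c(2) d(2) by auto
  then have "(\<lambda>i. d * refl a b i) \<in> rad \<Phi>"
    unfolding refl_unit_scale[OF sixth_roots_norm[OF c(1)]] rad_def by blast
  then show ?thesis
    using d(1) by (auto simp: unit_rad_def)
qed

lemma rad_subset_unit_rad:
  assumes "\<Psi> \<subseteq> unit_rad \<Phi>"
  shows "rad \<Psi> \<subseteq> unit_rad \<Phi>"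
proof -
  have "rad_step \<Psi> n \<subseteq> unit_rad \<Phi>" for n
  proof (induction n)
    case (Suc n)
    then show ?case
      using unit_rad_refl by fastforce
  qed (use assms in simp)
  then show ?thesis
    by (auto simp: rad_def)
qed

lemma eq_up_to_units_rad:
  assumes "\<Phi> \<subseteq> \<Psi>" "\<Psi> \<subseteq> unit_rad \<Phi>"
  shows "eq_up_to_units (rad \<Phi>) (rad \<Psi>)"
  unfolding eq_up_to_units_def
proof (intro conjI ballI)
  fix a assume "a \<in> rad \<Phi>"
  then have "a \<in> rad \<Psi>" and "a = (\<lambda>i. 1 * a i)"
    using rad_mono[OF assms(1)] by auto
  then show "\<exists>u\<in>Eis_units. \<exists>b\<in>rad \<Psi>. a = (\<lambda>i. u * b i)"
    using sixth_roots_Eis_units[OF one_sixth_root] by blast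
next
  fix b assume "b \<in> rad \<Psi>"
  then obtain u where u: "u \<in> sixth_roots" "(\<lambda>i. u * b i) \<in> rad \<Phi>"
    using rad_subset_unit_rad[OF assms(2)] by (auto simp: unit_rad_def)
  have "b = (\<lambda>i. cnj u * (u * b i))"
    using sixth_roots_norm[OF u(1)] by (simp add: mult.assoc[symmetric])
  then show "\<exists>u\<in>Eis_units. \<exists>a\<in>rad \<Phi>. b = (\<lambda>i. u * a i)"
    using u(2) sixth_roots_Eis_units[OF sixth_roots_cnj[OF u(1)]]
    by (intro bexI[of _ "cnj u"] bexI[of _ "\<lambda>i. u * b i"])
qed

definition derived_roots :: "vec set \<Rightarrow> vec set" where
  "derived_roots \<Phi> = {v \<in> unit_rad \<Phi>. herm v v \<noteq> 0 \<and> refl v \<in> generate (BijGroup UNIV) (refl ` \<Phi>)}"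

lemma subset_derived_roots: "\<forall>r\<in>\<Phi>. herm r r \<noteq> 0 \<Longrightarrow> \<Phi> \<subseteq> derived_roots \<Phi>"
  using subset_unit_rad by (auto simp: derived_roots_def intro: generate.incl)

lemma derived_roots_scale:
  assumes "v \<in> derived_roots \<Phi>" "c \<in> sixth_roots"
  shows "(\<lambda>i. c * v i) \<in> derived_roots \<Phi>"
  using assms unit_rad_scale herm_scale[of c v c v] sixth_roots_norm[OF assms(2)]
    refl_unit_mirror[OF sixth_roots_norm[OF assms(2)]]
  by (simp add: derived_roots_def)

lemma derived_roots_refl:
  assumes a: "a \<in> derived_roots \<Phi>" and v: "v \<in> derived_roots \<Phi>"
  shows "refl a v \<in> derived_roots \<Phi>"
proof -
  let ?G = "generate (BijGroup UNIV) (refl ` \<Phi>)"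
  have Na: "herm a a \<noteq> 0" and Nv: "herm v v \<noteq> 0" and ga: "refl a \<in> ?G" and gv: "refl v \<in> ?G"
    using a v by (auto simp: derived_roots_def)
  have "refl a \<circ> refl v \<in> ?G" "bij (refl a \<circ> refl v)"
    using generate_BijGroup_comp[OF ga gv] bij_refl[OF Na] bij_refl[OF Nv] bij_comp by auto
  then have "refl a \<circ> refl v \<circ> refl a \<in> ?G" "bij (refl a \<circ> refl v \<circ> refl a)"
    using generate_BijGroup_comp[OF _ ga] bij_refl[OF Na] bij_comp by auto
  then have "refl (refl a v) \<in> ?G"
    unfolding refl_refl[OF Na] using generate_BijGroup_comp[OF _ ga] bij_refl[OF Na] by auto
  moreover have "herm (refl a v) (refl a v) \<noteq> 0"
    using refl_isometry[OF Na] Nv by simp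
  moreover have "refl a v \<in> unit_rad \<Phi>"
    using a v unit_rad_refl by (auto simp: derived_roots_def)
  ultimately show ?thesis
    by (simp add: derived_roots_def)
qed

lemma refl_group_eq:
  assumes "\<Phi> \<subseteq> \<Psi>" "\<Psi> \<subseteq> derived_roots \<Phi>"
  shows "refl_group \<Phi> = refl_group \<Psi>"
proof -
  interpret G: group "BijGroup (UNIV :: vec set)"
    by (rule group_BijGroup)
  have "refl ` \<Phi> \<subseteq> carrier (BijGroup UNIV)"
    using assms bij_refl by (force simp: carrier_BijGroup_UNIV derived_roots_def)
  then have "subgroup (generate (BijGroup UNIV) (refl ` \<Phi>)) (BijGroup UNIV)"
    by (rule G.generate_is_subgroup)
  moreover have "refl ` \<Psi> \<subseteq> generate (BijGroup UNIV) (refl ` \<Phi>)"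
    using assms(2) by (auto simp: derived_roots_def)
  ultimately have "refl_group \<Psi> \<subseteq> refl_group \<Phi>"
    unfolding refl_group_def by (rule G.generate_subgroup_incl[rotated])
  moreover have "refl_group \<Phi> \<subseteq> refl_group \<Psi>"
    unfolding refl_group_def using assms(1) by (intro G.mono_generate) auto
  ultimately show ?thesis
    by blast
qed

section \<open>Exact arithmetic on coordinate lists\<close>

definition vec_of :: "eint list \<Rightarrow> vec" where
  "vec_of xs = (\<lambda>i. if i < length xs then eis (xs ! i) else 0)"

lemma vec_of_scale: "vec_of (map (emult c) xs) = (\<lambda>i. eis c * vec_of xs i)"
  by (simp add: vec_of_def eis_mult fun_eq_iff)

fun esum :: "eint list \<Rightarrow> eint" where
  "esum [] = (0, 0)"
| "esum (z # zs) = eadd z (esum zs)"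

lemma sum_eis: "(\<Sum>i<length zs. eis (zs ! i)) = eis (esum zs)"
proof (induction zs)
  case Nil
  then show ?case
    by (simp add: eis_def)
next
  case (Cons z zs)
  then show ?case
    unfolding length_Cons sum.lessThan_Suc_shift by (simp add: eis_add del: eadd.simps)
qed

definition herm3 :: "eint list \<Rightarrow> eint list \<Rightarrow> eint" where
  "herm3 xs ys = esub
     (emult (3, 0) (eadd (emult (emult (ecnj (xs ! 12)) (-1, -2)) (ys ! 13))
                         (emult (emult (ecnj (xs ! 13)) (1, 2)) (ys ! 12))))
     (esum (map2 (\<lambda>x y. emult (ecnj x) y) (take 12 xs) (take 12 ys)))"

lemma herm_vec_of:
  assumes "length xs = 14" "length ys = 14"
  shows "3 * herm (vec_of xs) (vec_of ys) = eis (herm3 xs ys)"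
proof -
  let ?d = "map2 (\<lambda>x y. emult (ecnj x) y) (take 12 xs) (take 12 ys)"
  have "(\<Sum>i<12. cnj (vec_of xs i) * vec_of ys i) = (\<Sum>i<length ?d. eis (?d ! i))"
    using assms by (intro sum.cong) (simp_all add: vec_of_def eis_cnj eis_mult)
  then have dot: "(\<Sum>i<12. cnj (vec_of xs i) * vec_of ys i) = eis (esum ?d)"
    by (simp only: sum_eis)
  have H: "vec_of xs 12 = eis (xs ! 12)" "vec_of xs 13 = eis (xs ! 13)"
    "vec_of ys 12 = eis (ys ! 12)" "vec_of ys 13 = eis (ys ! 13)"
    using assms by (simp_all add: vec_of_def)
  have theta: "theta = eis (1, 2)" "cnj theta = eis (-1, -2)"
    by (simp_all add: theta_eis eis_cnj)
  have "3 * herm (vec_of xs) (vec_of ys) =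
      3 * (cnj (eis (xs ! 12)) * eis (-1, -2) * eis (ys ! 13) + cnj (eis (xs ! 13)) * eis (1, 2) * eis (ys ! 12))
      - eis (esum ?d)"
    unfolding herm_def dot H unfolding theta(2) unfolding theta(1) by (simp add: algebra_simps)
  also have "\<dots> = eis (herm3 xs ys)"
  proof -
    have "(3 :: complex) = eis (3, 0)"
      by (simp add: eis_def)
    then show ?thesis
      unfolding herm3_def by (simp only: eis_cnj eis_mult eis_add eis_diff)
  qed
  finally show ?thesis .
qed

lemma herm_vec_of_eq:
  assumes "length xs = 14" "length ys = 14" "herm3 xs ys = (3 * x, 3 * y)"
  shows "herm (vec_of xs) (vec_of ys) = eis (x, y)"
  using herm_vec_of[OF assms(1,2)] eis_scale[of 3 x y] assms(3) by simp

text \<open>For a root \<open>a\<close> (\<open>herm3 a a = -9\<close>) the reflection is \<open>v + q a\<close> with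
  \<open>q = (1 - omega) herm3 a v / 9\<close>; the check fails unless \<open>q\<close> is an Eisenstein integer.\<close>
definition refl_list :: "eint list \<Rightarrow> eint list \<Rightarrow> eint list option" where
  "refl_list a v = (let p = emult (1, -1) (herm3 a v) in
     if length a = 14 \<and> length v = 14 \<and> herm3 a a = (-9, 0) \<and> fst p mod 9 = 0 \<and> snd p mod 9 = 0
     then Some (map2 (\<lambda>x y. eadd x (emult (fst p div 9, snd p div 9) y)) v a) else None)"

lemma refl_list_sound:
  assumes "refl_list a v = Some w"
  shows "vec_of w = refl (vec_of a) (vec_of v)"
proof -
  define p where "p = emult (1, -1) (herm3 a v)"
  define q where "q = (fst p div 9, snd p div 9)"
  have a: "length a = 14" "length v = 14" "herm3 a a = (-9, 0)" "fst p mod 9 = 0" "snd p mod 9 = 0"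
    and w: "w = map2 (\<lambda>x y. eadd x (emult q y)) v a"
    using assms by (auto simp: refl_list_def Let_def p_def q_def split: if_splits)
  have "herm (vec_of a) (vec_of a) = -3"
    using herm_vec_of_eq[of a a "-3" 0] a by (simp add: eis_def)
  moreover have "(1 - omega) * herm (vec_of a) (vec_of v) = 3 * eis q"
  proof -
    have "3 * ((1 - omega) * herm (vec_of a) (vec_of v)) = (1 - omega) * (3 * herm (vec_of a) (vec_of v))"
      by (simp add: algebra_simps)
    also have "\<dots> = eis p"
      unfolding herm_vec_of[OF a(1,2)] p_def by (simp add: eis_mult[symmetric]) (simp add: eis_def)
    also have "p = (9 * fst q, 9 * snd q)"
      using a(4,5) mult_div_mod_eq[of 9 "fst p"] mult_div_mod_eq[of 9 "snd p"]
      by (simp add: q_def prod_eq_iff)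
    also have "eis (9 * fst q, 9 * snd q) = 3 * (3 * eis q)"
      using eis_scale[of 9 "fst q" "snd q"] by simp
    finally show ?thesis
      by simp
  qed
  ultimately have coeff: "(1 - omega) * herm (vec_of a) (vec_of v) / herm (vec_of a) (vec_of a) = - eis q"
    by simp
  show ?thesis
  proof
    fix i
    have "refl (vec_of a) (vec_of v) i = vec_of v i + eis q * vec_of a i"
      unfolding refl_def coeff by simp
    then show "vec_of w i = refl (vec_of a) (vec_of v) i"
      using a(1,2) by (simp add: vec_of_def w eis_mult eis_add del: eadd.simps emult.simps)
  qed
qed

fun refl_chain :: "eint list \<Rightarrow> eint list list \<Rightarrow> eint list option" where
  "refl_chain v [] = Some v"
| "refl_chain v (a # as) = (case refl_list a v of None \<Rightarrow> None | Some w \<Rightarrow> refl_chain w as)"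

lemma refl_chain_derived:
  assumes "vec_of v \<in> derived_roots \<Phi>" "\<forall>a\<in>set as. vec_of a \<in> derived_roots \<Phi>"
    and "refl_chain v as = Some w"
  shows "vec_of w \<in> derived_roots \<Phi>"
  using assms
proof (induction as arbitrary: v)
  case (Cons a as)
  then obtain u where u: "refl_list a v = Some u" "refl_chain u as = Some w"
    by (auto split: option.splits)
  have "vec_of u \<in> derived_roots \<Phi>"
    using Cons.prems derived_roots_refl by (simp add: refl_list_sound[OF u(1)])
  with Cons.IH Cons.prems(2) u(2) show ?case
    by simp
qed simp

text \<open>A derivation \<open>(t, s, c, ms)\<close> obtains the root of \<open>t\<close> from that of \<open>s\<close> by successive
  reflections in the roots of \<open>ms\<close>, followed by multiplication with the unit \<open>c\<close>; the roots
  used must already be known, and \<open>t\<close> becomes known.\<close>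
fun derivation_ok :: "('v \<Rightarrow> eint list) \<Rightarrow> 'v list \<Rightarrow> ('v \<times> 'v \<times> eint \<times> 'v list) list \<Rightarrow> bool" where
  "derivation_ok R known [] = True"
| "derivation_ok R known ((t, s, c, ms) # ds) \<longleftrightarrow>
     s \<in> set known \<and> set ms \<subseteq> set known \<and> c \<in> set unit_list \<and>
     (case refl_chain (R s) (map R ms) of None \<Rightarrow> False | Some w \<Rightarrow> R t = map (emult c) w) \<and>
     derivation_ok R (t # known) ds"

lemma derivation_ok_derived:
  assumes "derivation_ok R known ds" "\<forall>k\<in>set known. vec_of (R k) \<in> derived_roots \<Phi>"
  shows "\<forall>d\<in>set ds. vec_of (R (fst d)) \<in> derived_roots \<Phi>"
  using assms
proof (induction ds arbitrary: known)
  case (Cons d ds)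
  obtain t s c ms where d: "d = (t, s, c, ms)"
    by (cases d) auto
  from Cons.prems d obtain w where
    ok: "s \<in> set known" "set ms \<subseteq> set known" "c \<in> set unit_list"
      "refl_chain (R s) (map R ms) = Some w" "R t = map (emult c) w" "derivation_ok R (t # known) ds"
    by (auto split: option.splits)
  have "vec_of w \<in> derived_roots \<Phi>"
    using refl_chain_derived[OF _ _ ok(4)] ok(1,2) Cons.prems(2) by auto
  then have "vec_of (R t) \<in> derived_roots \<Phi>"
    unfolding ok(5) vec_of_scale using ok(3) by (simp add: derived_roots_scale sixth_roots_def)
  with Cons.IH[OF ok(6)] Cons.prems(2) d show ?case
    by simp
qed simp

text \<open>A witness \<open>(m, c, z, a, e)\<close> for the Leech part of a vector: the data \<open>m, c, z\<close> of the
  definition of \<open>leech\<close>, the coefficients \<open>a\<close> of the Golay word \<open>c\<close> mod 3 in the generator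
  rows, and \<open>e\<close> with \<open>sum z - m = theta e\<close>.\<close>
type_synonym lattice_witness = "int \<times> int list \<times> eint list \<times> int list \<times> eint"

definition lattice_witness_ok :: "eint list \<Rightarrow> lattice_witness \<Rightarrow> bool" where
  "lattice_witness_ok v = (\<lambda>(m, cs, zs, as, e).
     length v = 14 \<and> length cs = 12 \<and> length zs = 12 \<and> length as = 6 \<and>
     m \<in> {-1, 0, 1} \<and> set cs \<subseteq> {-1, 0, 1} \<and>
     (\<forall>i\<in>set [0..<12]. (cs ! i - (\<Sum>j\<leftarrow>[0..<6]. as ! j * golay_gen j i)) mod 3 = 0) \<and>
     esub (esum zs) (m, 0) = emult (1, 2) e \<and>
     (\<forall>i\<in>set [0..<12]. v ! i = eadd (m, 0) (eadd (emult (1, 2) (cs ! i, 0)) (emult (3, 0) (zs ! i)))))"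

lemma lattice_witness_ok_Lat:
  assumes "lattice_witness_ok v w"
  shows "vec_of v \<in> Lat"
proof -
  obtain m cs zs as e where w: "w = (m, cs, zs, as, e)"
    by (cases w) auto
  have ok: "length v = 14" "length cs = 12" "length zs = 12" "m \<in> {-1, 0, 1}" "set cs \<subseteq> {-1, 0, 1}"
    "\<forall>i<12. (cs ! i - (\<Sum>j<6. as ! j * golay_gen j i)) mod 3 = 0"
    "esub (esum zs) (m, 0) = emult (1, 2) e"
    "\<forall>i<12. v ! i = eadd (m, 0) (eadd (emult (1, 2) (cs ! i, 0)) (emult (3, 0) (zs ! i)))"
    using assms by (auto simp: lattice_witness_ok_def w atLeast0LessThan interv_sum_list_conv_sum_set_nat)
  define c where "c = (\<lambda>i. cs ! i)"
  define z where "z = (\<lambda>i. eis (zs ! i))"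
  have "golay_word c"
    unfolding golay_word_def c_def using ok(6) by blast
  moreover have "\<forall>i<12. c i \<in> {-1, 0, 1}"
    using ok(2,5) nth_mem[of _ cs] by (force simp: c_def)
  moreover have "\<forall>i<12. z i \<in> Eis"
    by (simp add: z_def eis_in_Eis)
  moreover have "cong_theta (\<Sum>i<12. z i) (of_int m)"
  proof -
    have "(\<Sum>i<12. z i) - of_int m = eis (esub (esum zs) (m, 0))"
      using sum_eis[of zs] ok(3) by (simp add: z_def eis_diff[symmetric]) (simp add: eis_def)
    also have "\<dots> = theta * eis e"
      unfolding ok(7) by (simp add: theta_eis eis_mult)
    finally show ?thesis
      unfolding cong_theta_def using eis_in_Eis by blast
  qed
  moreover have "\<forall>i<12. vec_of v i = of_int m + theta * of_int (c i) + 3 * z i"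
  proof (intro allI impI)
    fix i :: nat
    assume "i < 12"
    then have "vec_of v i = eis (eadd (m, 0) (eadd (emult (1, 2) (cs ! i, 0)) (emult (3, 0) (zs ! i))))"
      using ok(1,8) by (simp add: vec_of_def del: eadd.simps emult.simps)
    also have "\<dots> = eis (m, 0) + theta * eis (cs ! i, 0) + eis (3, 0) * eis (zs ! i)"
      by (simp only: eis_add[symmetric] eis_mult[symmetric] theta_eis add.assoc)
    finally show "vec_of v i = of_int m + theta * of_int (c i) + 3 * z i"
      by (simp add: c_def z_def eis_def)
  qed
  ultimately have "vec_of v \<in> leech"
    unfolding leech_def using ok(4) by blast
  moreover have "vec_of v 12 \<in> Eis" "vec_of v 13 \<in> Eis" "\<forall>i\<ge>14. vec_of v i = 0"
    using ok(1) by (simp_all add: vec_of_def eis_in_Eis)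
  ultimately show ?thesis
    unfolding Lat_def by blast
qed

section \<open>The configuration\<close>

type_synonym vertex = "(int \<times> int \<times> int) + (int \<times> int \<times> int)"

definition P2_list :: "(int \<times> int \<times> int) list" where
  "P2_list = [(0,0,1), (0,1,0), (1,0,0), (1,1,1), (0,1,2), (1,2,2), (0,1,1),
              (1,2,0), (1,1,0), (1,0,2), (1,2,1), (1,1,2), (1,0,1)]"

lemma P2_eq: "P2 = set P2_list"
  by (auto simp: P2_def P2_list_def)

definition x_table :: "((int \<times> int \<times> int) \<times> eint list) list" where
  "x_table = [
    ((0,0,1), [(9,-4), (-1,-6), (6,2), (6,2), (6,2), (-1,3), (-1,0), (-4,-6), (0,-4), (5,-6), (-9,-4), (-1,9), (-3,3), (-6,-14)]),
    ((0,1,0), [(7,-38), (-16,-21), (15,-10), (15,-10), (15,-10), (8,18), (-1,0), (-24,-16), (-11,-14), (-12,-40), (-23,10), (27,44), (4,20), (-53,-43)]),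
    ((1,0,0), [(-26,-8), (-3,8), (-15,-10), (-12,-10), (-12,-10), (7,-2), (-1,0), (2,12), (-3,5), (-18,2), (17,15), (13,-11), (10,0), (0,26)]),
    ((1,1,1), [(-26,-8), (-3,8), (-12,-10), (-15,-10), (-12,-10), (7,-2), (-1,0), (2,12), (-3,5), (-18,2), (17,15), (13,-11), (10,0), (0,26)]),
    ((0,1,2), [(-26,-8), (-3,8), (-12,-10), (-12,-10), (-15,-10), (7,-2), (-1,0), (2,12), (-3,5), (-18,2), (17,15), (13,-11), (10,0), (0,26)]),
    ((1,2,2), [(0,23), (10,10), (-6,8), (-6,8), (-6,8), (-6,-10), (-1,0), (15,8), (7,7), (11,24), (11,-9), (-17,-23), (-4,-12), (30,20)]),
    ((0,1,1), [(-24,-7), (-4,6), (-12,-10), (-12,-10), (-12,-10), (5,-3), (-1,0), (2,12), (-3,5), (-16,3), (15,14), (11,-9), (9,0), (0,24)]),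
    ((1,2,0), [(-23,-5), (-3,8), (-13,-9), (-13,-9), (-13,-9), (4,-5), (-1,0), (3,11), (-3,5), (-17,4), (17,12), (11,-12), (9,-1), (3,26)]),
    ((1,1,0), [(-19,-9), (-5,4), (-8,-8), (-8,-8), (-8,-8), (6,-1), (-1,0), (-2,7), (-3,2), (-15,-1), (10,13), (14,-3), (8,2), (-5,16)]),
    ((1,0,2), [(-1,24), (9,11), (-8,7), (-8,7), (-8,7), (-5,-11), (-1,0), (14,9), (7,10), (9,23), (12,-7), (-17,-26), (-3,-12), (31,23)]),
    ((1,2,1), [(-29,-5), (-3,11), (-17,-11), (-17,-11), (-17,-11), (7,-5), (-1,0), (4,16), (-3,5), (-19,6), (20,15), (12,-16), (11,-2), (4,33)]),
    ((1,1,2), [(-7,18), (6,11), (-10,3), (-10,3), (-10,3), (-2,-8), (-1,0), (13,10), (4,7), (2,21), (15,-1), (-12,-25), (0,-10), (26,26)]),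
    ((1,0,1), [(-25,-15), (-8,4), (-10,-12), (-10,-12), (-10,-12), (9,2), (-1,0), (-3,11), (-6,2), (-22,-6), (13,16), (19,-2), (11,4), (-10,19)])]"

definition l_table :: "((int \<times> int \<times> int) \<times> eint list) list" where
  "l_table = [
    ((0,0,1), [(3,-16), (-7,-9), (8,-3), (6,-4), (6,-4), (3,8), (2,0), (-10,-6), (-4,-6), (-3,-16), (-10,3), (9,17), (1,8), (-21,-18)]),
    ((0,1,0), [(10,-41), (-17,-23), (20,-9), (18,-10), (18,-10), (7,19), (2,0), (-26,-20), (-11,-17), (-11,-44), (-28,9), (27,50), (3,22), (-58,-51)]),
    ((1,0,0), [(-14,-26), (-13,-6), (-1,-12), (-1,-12), (1,-11), (9,8), (2,0), (-12,-1), (-8,-5), (-19,-21), (-1,15), (24,17), (9,11), (-29,-6)]),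
    ((1,1,1), [(34,-32), (-13,-30), (29,0), (31,1), (31,1), (1,22), (2,0), (-28,-30), (-7,-21), (7,-44), (-43,-6), (13,58), (-7,21), (-55,-73)]),
    ((0,1,2), [(33,-31), (-14,-29), (29,0), (29,0), (27,-1), (2,21), (2,0), (-28,-30), (-8,-20), (5,-45), (-41,-5), (15,56), (-6,21), (-54,-70)]),
    ((1,2,2), [(26,-30), (-12,-25), (23,-3), (23,-3), (25,-2), (2,18), (2,0), (-24,-25), (-8,-17), (3,-40), (-35,-2), (14,48), (-4,19), (-49,-60)]),
    ((0,1,1), [(40,-26), (-10,-30), (33,5), (31,4), (33,5), (-2,19), (2,0), (-26,-32), (-6,-19), (13,-41), (-44,-11), (8,57), (-10,19), (-49,-75)]),
    ((1,2,0), [(10,-41), (-17,-23), (18,-10), (20,-9), (18,-10), (7,19), (2,0), (-27,-19), (-12,-16), (-10,-45), (-27,8), (27,50), (3,22), (-58,-51)]),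
    ((1,1,0), [(14,-45), (-19,-27), (23,-9), (23,-9), (23,-9), (8,24), (2,0), (-31,-24), (-13,-18), (-10,-51), (-34,9), (29,57), (2,25), (-65,-60)]),
    ((1,0,2), [(9,-10), (-4,-9), (8,0), (10,1), (8,0), (0,5), (2,0), (-7,-9), (-2,-5), (2,-12), (-12,-1), (4,16), (-2,6), (-15,-20)]),
    ((1,2,1), [(32,-33), (-12,-28), (29,0), (29,0), (29,0), (1,22), (2,0), (-26,-29), (-8,-20), (5,-45), (-39,-4), (15,56), (-6,21), (-54,-70)]),
    ((1,1,2), [(32,-27), (-9,-25), (27,2), (27,2), (27,2), (1,19), (2,0), (-24,-28), (-5,-17), (10,-38), (-39,-7), (11,51), (-7,18), (-47,-66)]),
    ((1,0,1), [(-8,-65), (-27,-25), (15,-22), (15,-22), (15,-22), (16,25), (2,0), (-37,-18), (-18,-19), (-30,-61), (-25,24), (49,61), (12,31), (-80,-48)])]"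

definition lattice_witnesses :: "lattice_witness list" where
  "lattice_witnesses = [
    (-1, [1, 0, 1, 1, 1, 0, 0, 0, 1, 0, 1, 0],
      [(3,-2), (0,-2), (2,0), (2,0), (2,0), (0,1), (0,0), (-1,-2), (0,-2), (2,-2), (-3,-2), (0,3)],
      [1, 0, 1, 1, 1, 0], (-8,-8)),
    (-1, [-1, 0, 1, 1, 1, 0, 0, 1, -1, 1, -1, 1],
      [(3,-12), (-5,-7), (5,-4), (5,-4), (5,-4), (3,6), (0,0), (-8,-6), (-3,-4), (-4,-14), (-7,4), (9,14)],
      [2, 0, 1, 1, 1, 0], (-22,-13)),
    (-1, [-1, 1, 1, 1, 1, -1, 0, 0, 1, 1, 0, -1],
      [(-8,-2), (-1,2), (-5,-4), (-4,-4), (-4,-4), (3,0), (0,0), (1,4), (-1,1), (-6,0), (6,5), (5,-3)],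
      [2, 1, 1, 1, 1, 2], (1,7)),
    (-1, [-1, 1, 1, 1, 1, -1, 0, 0, 1, 1, 0, -1],
      [(-8,-2), (-1,2), (-4,-4), (-5,-4), (-4,-4), (3,0), (0,0), (1,4), (-1,1), (-6,0), (6,5), (5,-3)],
      [2, 1, 1, 1, 1, 2], (1,7)),
    (-1, [-1, 1, 1, 1, 1, -1, 0, 0, 1, 1, 0, -1],
      [(-8,-2), (-1,2), (-4,-4), (-4,-4), (-5,-4), (3,0), (0,0), (1,4), (-1,1), (-6,0), (6,5), (5,-3)],
      [2, 1, 1, 1, 1, 2], (1,7)),
    (-1, [1, -1, 1, 1, 1, 1, 0, 1, -1, 0, 0, -1],
      [(0,7), (4,4), (-2,2), (-2,2), (-2,2), (-2,-4), (0,0), (5,2), (3,3), (4,8), (4,-3), (-5,-7)],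
      [1, 2, 1, 1, 1, 1], (8,0)),
    (-1, [1, 0, 1, 1, 1, 0, 0, 0, 1, 0, 1, 0],
      [(-8,-3), (-1,2), (-4,-4), (-4,-4), (-4,-4), (2,-1), (0,0), (1,4), (-1,1), (-5,1), (5,4), (4,-3)],
      [1, 0, 1, 1, 1, 0], (0,7)),
    (-1, [-1, 1, 0, 0, 0, -1, 0, 1, 1, -1, 0, 0],
      [(-7,-1), (-1,2), (-4,-3), (-4,-3), (-4,-3), (2,-1), (0,0), (1,3), (-1,1), (-5,2), (6,4), (4,-4)],
      [2, 1, 0, 0, 0, 2], (2,7)),
    (-1, [0, -1, -1, -1, -1, 1, 0, -1, 1, 1, -1, 0],
      [(-6,-3), (-1,2), (-2,-2), (-2,-2), (-2,-2), (2,-1), (0,0), (0,3), (-1,0), (-5,-1), (4,5), (5,-1)],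
      [0, 2, 2, 2, 2, 1], (1,4)),
    (-1, [0, 1, -1, -1, -1, -1, 0, 0, -1, 1, 1, -1],
      [(0,8), (3,3), (-2,3), (-2,3), (-2,3), (-1,-3), (0,0), (5,3), (3,4), (3,7), (4,-3), (-5,-8)],
      [0, 1, 2, 2, 2, 2], (11,2)),
    (-1, [-1, 1, -1, -1, -1, -1, 0, -1, 1, 0, 0, 1],
      [(-9,-1), (-1,3), (-5,-3), (-5,-3), (-5,-3), (3,-1), (0,0), (2,6), (-1,1), (-6,2), (7,5), (4,-6)],
      [2, 1, 2, 2, 2, 2], (5,10)),
    (-1, [0, 1, 0, 0, 0, -1, 0, -1, -1, 0, 1, 1],
      [(-2,6), (2,3), (-3,1), (-3,1), (-3,1), (0,-2), (0,0), (5,4), (2,3), (1,7), (5,-1), (-4,-9)],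
      [0, 1, 0, 0, 0, 2], (9,4)),
    (-1, [0, -1, 0, 0, 0, 1, 0, 1, 1, 0, -1, -1],
      [(-8,-5), (-2,2), (-3,-4), (-3,-4), (-3,-4), (3,0), (0,0), (-1,3), (-2,0), (-7,-2), (5,6), (7,0)],
      [0, 2, 0, 0, 0, 1], (-1,6)),
    (-1, [1, 0, 0, 1, 1, 1, 0, 0, 0, 1, 0, 1],
      [(1,-6), (-2,-3), (3,-1), (2,-2), (2,-2), (1,2), (1,0), (-3,-2), (-1,-2), (-1,-6), (-3,1), (3,5)],
      [1, 0, 0, 1, 1, 1], (-12,-8)),
    (-1, [-1, -1, 0, 1, 1, -1, 0, -1, -1, -1, 0, 1],
      [(4,-13), (-5,-7), (7,-3), (6,-4), (6,-4), (3,7), (1,0), (-8,-6), (-3,-5), (-3,-14), (-9,3), (9,16)],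
      [2, 2, 0, 1, 1, 2], (-23,-16)),
    (-1, [-1, 0, 0, 0, -1, 1, 0, 1, -1, 0, 0, 1],
      [(-4,-8), (-4,-2), (0,-4), (0,-4), (1,-3), (3,2), (1,0), (-4,-1), (-2,-1), (-6,-7), (0,5), (8,5)],
      [2, 0, 0, 0, 2, 1], (-10,-2)),
    (-1, [-1, 0, 0, -1, -1, -1, 0, 0, 0, -1, 0, -1],
      [(12,-10), (-4,-10), (10,0), (11,1), (11,1), (1,8), (1,0), (-9,-10), (-2,-7), (3,-14), (-14,-2), (5,20)],
      [2, 0, 0, 2, 2, 2], (-24,-25)),
    (-1, [1, -1, 0, 0, 1, 0, 0, 0, -1, 0, -1, 1],
      [(11,-11), (-4,-9), (10,0), (10,0), (9,-1), (1,7), (1,0), (-9,-10), (-2,-6), (2,-15), (-13,-1), (5,18)],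
      [1, 2, 0, 0, 1, 0], (-26,-24)),
    (-1, [0, 1, 0, 0, -1, 0, 0, 1, -1, 1, -1, 0],
      [(9,-10), (-4,-9), (8,-1), (8,-1), (9,0), (1,6), (1,0), (-8,-9), (-2,-5), (1,-14), (-11,0), (5,16)],
      [0, 1, 0, 0, 2, 0], (-24,-21)),
    (-1, [-1, 0, 1, -1, 1, -1, 0, -1, 1, -1, -1, 0],
      [(14,-8), (-3,-10), (11,1), (11,2), (11,1), (0,7), (1,0), (-8,-10), (-2,-7), (5,-13), (-14,-3), (3,19)],
      [2, 0, 1, 2, 1, 2], (-24,-27)),
    (-1, [-1, -1, 1, 0, 1, -1, 0, 1, 1, 0, 1, 1],
      [(4,-13), (-5,-7), (6,-4), (7,-3), (6,-4), (3,7), (1,0), (-9,-7), (-4,-6), (-3,-15), (-9,2), (9,16)],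
      [2, 2, 1, 0, 1, 2], (-25,-16)),
    (-1, [0, 0, 0, 0, 0, 0, 0, 0, 0, 0, 0, 0],
      [(5,-15), (-6,-9), (8,-3), (8,-3), (8,-3), (3,8), (1,0), (-10,-8), (-4,-6), (-3,-17), (-11,3), (10,19)],
      [0, 0, 0, 0, 0, 0], (-26,-18)),
    (-1, [1, 0, 0, -1, 0, 1, 0, 0, -1, 0, 1, -1],
      [(3,-4), (-1,-3), (3,0), (4,1), (3,0), (0,1), (1,0), (-2,-3), (0,-1), (1,-4), (-4,-1), (2,6)],
      [1, 0, 0, 2, 0, 1], (-9,-10)),
    (-1, [0, 1, 0, 0, 0, -1, 0, -1, -1, 0, 1, 1],
      [(11,-11), (-4,-10), (10,0), (10,0), (10,0), (1,8), (1,0), (-8,-9), (-2,-6), (2,-15), (-13,-2), (5,18)],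
      [0, 1, 0, 0, 0, 2], (-26,-25)),
    (-1, [0, 1, 1, 1, 1, -1, 0, 1, -1, -1, 1, 0],
      [(11,-9), (-3,-9), (9,0), (9,0), (9,0), (1,7), (1,0), (-8,-10), (-1,-5), (4,-12), (-13,-3), (4,17)],
      [0, 1, 1, 1, 1, 2], (-24,-24)),
    (-1, [-1, 1, 1, 1, 1, -1, 0, 0, 1, 1, 0, -1],
      [(-2,-21), (-9,-9), (5,-8), (5,-8), (5,-8), (6,9), (1,0), (-12,-6), (-6,-7), (-10,-21), (-8,8), (17,21)],
      [2, 1, 1, 1, 1, 2], (-31,-12))]"

definition tree :: "vertex list" where
  "tree = [Inl (0,0,1), Inr (1,0,0), Inl (0,1,0), Inr (1,0,1), Inl (1,2,2), Inr (1,2,2), Inr (0,1,0), Inl (1,0,0),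
    Inr (0,1,1), Inl (1,2,1), Inr (1,2,1), Inr (1,2,0), Inl (1,1,1), Inr (1,1,1), Inl (1,2,0), Inr (1,1,2)]"

definition derivations :: "(vertex \<times> vertex \<times> eint \<times> vertex list) list" where
  "derivations = [
    (Inl (0,1,1), Inl (0,0,1), (1,0),
      [Inr (0,1,0), Inr (0,1,0), Inr (1,2,0), Inl (1,1,1), Inr (1,1,1), Inl (1,2,0),
       Inr (1,1,2), Inl (1,0,0), Inl (1,0,0), Inr (0,1,1), Inr (0,1,1), Inl (1,2,1),
       Inl (1,2,1), Inr (1,2,1), Inr (1,2,1)]),
    (Inl (1,1,0), Inl (0,0,1), (1,0),
      [Inr (1,0,0), Inr (1,0,0), Inr (0,1,0), Inl (1,0,0), Inr (0,1,1), Inl (1,2,1),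
       Inr (1,2,1), Inl (0,1,0), Inl (0,1,0), Inr (1,0,1), Inr (1,0,1), Inl (1,2,2),
       Inl (1,2,2), Inr (1,2,2), Inr (1,2,2)]),
    (Inl (1,0,1), Inl (0,0,1), (1,0),
      [Inr (1,0,0), Inr (1,0,0), Inr (1,2,0), Inl (1,1,1), Inr (1,1,1), Inl (1,2,0),
       Inr (1,1,2), Inl (0,1,0), Inl (0,1,0), Inr (1,0,1), Inr (1,0,1), Inl (1,2,2),
       Inl (1,2,2), Inr (1,2,2), Inr (1,2,2)]),
    (Inl (0,1,2), Inr (1,2,1), (0,-1),
      [Inl (0,1,1), Inr (1,1,2), Inl (1,2,0), Inr (1,1,1), Inl (1,1,0), Inl (1,1,0),
       Inr (1,2,0), Inr (1,2,0), Inl (0,0,1), Inl (0,0,1), Inr (0,1,0), Inr (0,1,0),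
       Inl (1,0,0), Inl (1,0,0), Inr (0,1,1), Inr (0,1,1)]),
    (Inl (1,0,2), Inr (1,2,2), (0,-1),
      [Inl (1,1,0), Inl (1,1,0), Inr (1,2,0), Inr (1,2,0), Inl (1,0,1), Inr (1,1,2),
       Inl (1,2,0), Inr (1,1,1), Inl (0,0,1), Inl (0,0,1), Inr (1,0,0), Inr (1,0,0),
       Inl (0,1,0), Inl (0,1,0), Inr (1,0,1), Inr (1,0,1)]),
    (Inl (1,1,2), Inr (1,2,2), (0,-1),
      [Inl (1,1,0), Inr (1,2,1), Inl (1,2,1), Inr (0,1,1), Inl (1,0,1), Inl (1,0,1),
       Inr (0,1,0), Inr (0,1,0), Inl (0,0,1), Inl (0,0,1), Inr (1,0,0), Inr (1,0,0),
       Inl (0,1,0), Inl (0,1,0), Inr (1,0,1), Inr (1,0,1)]),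
    (Inr (1,1,0), Inr (0,1,0), (0,-1),
      [Inl (1,0,0), Inr (0,1,1), Inl (1,2,1), Inl (1,0,1), Inl (1,0,1), Inr (1,1,2),
       Inr (1,1,2), Inl (0,1,1), Inl (0,1,1), Inr (1,0,0), Inr (1,0,0), Inl (0,1,0),
       Inl (0,1,0), Inr (1,0,1), Inr (1,0,1), Inl (1,2,2), Inl (1,2,2)]),
    (Inr (0,0,1), Inl (0,0,1), (1,0),
      [Inr (0,1,0), Inr (0,1,0), Inr (1,2,0), Inl (1,1,1), Inr (1,1,1), Inl (1,2,0),
       Inl (1,0,1), Inl (1,0,1), Inr (1,2,2), Inr (1,2,2), Inl (1,2,2), Inl (1,2,2),
       Inr (1,0,1), Inr (1,0,1), Inl (0,1,0), Inl (0,1,0)]),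
    (Inr (1,0,2), Inl (0,0,1), (1,0),
      [Inr (0,1,0), Inl (1,0,0), Inr (0,1,1), Inl (1,2,1), Inr (1,2,0), Inr (1,2,0),
       Inl (1,1,0), Inl (1,1,0), Inr (1,2,2), Inr (1,2,2), Inl (1,2,2), Inl (1,2,2),
       Inr (1,0,1), Inr (1,0,1), Inl (0,1,0), Inl (0,1,0)]),
    (Inr (0,1,2), Inl (0,0,1), (1,1),
      [Inr (0,1,0), Inl (1,0,1), Inr (1,1,2), Inl (1,2,0), Inr (1,1,1), Inl (1,1,1),
       Inr (1,0,0), Inr (1,0,0), Inl (0,1,0), Inl (0,1,0), Inr (1,0,1), Inr (1,0,1),
       Inl (1,2,2), Inl (1,2,2)])]"

definition root_coords :: "vertex \<Rightarrow> eint list" where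
  "root_coords v = (case v of Inl p \<Rightarrow> the (map_of x_table p) | Inr m \<Rightarrow> the (map_of l_table m))"

definition conf_x :: "int \<times> int \<times> int \<Rightarrow> vec" where
  "conf_x p = vec_of (root_coords (Inl p))"

definition conf_l :: "int \<times> int \<times> int \<Rightarrow> vec" where
  "conf_l m = vec_of (root_coords (Inr m))"

lemma D_root_conf: "D_root conf_x conf_l = (\<lambda>v. vec_of (root_coords v))"
proof
  fix v
  show "D_root conf_x conf_l v = vec_of (root_coords v)"
    by (cases v) (simp_all add: conf_x_def conf_l_def)
qed

lemma tables_keys: "map fst x_table = P2_list" "map fst l_table = P2_list"
  by (simp_all add: x_table_def l_table_def P2_list_def)

lemma tables_lattice: "list_all2 lattice_witness_ok (map snd (x_table @ l_table)) lattice_witnesses"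
  by code_simp

lemma tables_norms: "\<forall>(p, r)\<in>set (x_table @ l_table). length r = 14 \<and> herm3 r r = (-9, 0)"
  by code_simp

lemma tables_gram:
  "\<forall>(p, r)\<in>set x_table. \<forall>(q, s)\<in>set x_table. p \<noteq> q \<longrightarrow> herm3 r s = (0, 0)"
  "\<forall>(p, r)\<in>set l_table. \<forall>(q, s)\<in>set l_table. p \<noteq> q \<longrightarrow> herm3 r s = (0, 0)"
  "\<forall>(p, r)\<in>set x_table. \<forall>(q, s)\<in>set l_table. herm3 r s = (if incident p q then (6, 3) else (0, 0))"
  by code_simp+

lemma tree_m666:
  "distinct tree \<and> length tree = 16 \<and> set tree \<subseteq> Inl ` set P2_list \<union> Inr ` set P2_list \<and>
   (\<forall>i\<in>set [0..<16]. \<forall>j\<in>set [0..<16]. m666_adj i j \<longleftrightarrow> inc_adj (tree ! i) (tree ! j))"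
  by code_simp

lemma derivations_cover:
  "derivation_ok root_coords tree derivations \<and>
   Inl ` set P2_list \<union> Inr ` set P2_list \<subseteq> set tree \<union> fst ` set derivations"
  by code_simp

lemma map_of_lookup: "k \<in> set (map fst t) \<Longrightarrow> (k, the (map_of t k)) \<in> set t"
  by (cases "map_of t k") (auto simp: map_of_eq_None_iff dest: map_of_SomeD)

lemma root_coords_tables:
  assumes "p \<in> P2"
  shows "(p, root_coords (Inl p)) \<in> set x_table" "(p, root_coords (Inr p)) \<in> set l_table"
  using map_of_lookup[of p x_table] map_of_lookup[of p l_table] assms
  by (simp_all add: root_coords_def tables_keys P2_eq)

lemma root_coords_table:
  assumes "v \<in> D_vertices"
  shows "root_coords v \<in> set (map snd (x_table @ l_table))"
proof -
  have "snd ` set x_table \<union> snd ` set l_table = set (map snd (x_table @ l_table))"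
    by simp
  moreover from assms obtain p where "p \<in> P2" "v = Inl p \<or> v = Inr p"
    by (auto simp: D_vertices_def)
  ultimately show ?thesis
    using root_coords_tables[of p] by (metis UnI1 UnI2 image_eqI snd_conv)
qed

lemma root_coords_norm:
  assumes "v \<in> D_vertices"
  shows "length (root_coords v) = 14" "herm3 (root_coords v) (root_coords v) = (-9, 0)"
  using root_coords_table[OF assms] tables_norms by auto

lemma is_root_root_coords:
  assumes "v \<in> D_vertices"
  shows "is_root (vec_of (root_coords v))"
proof -
  define R where "R = map snd (x_table @ l_table)"
  obtain k where "k < length R" "R ! k = root_coords v"
    using root_coords_table[OF assms] by (metis R_def in_set_conv_nth)
  then have "lattice_witness_ok (root_coords v) (lattice_witnesses ! k)"
    using tables_lattice unfolding R_def[symmetric] list_all2_conv_all_nth by metis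
  then have "vec_of (root_coords v) \<in> Lat"
    by (rule lattice_witness_ok_Lat)
  moreover have "herm (vec_of (root_coords v)) (vec_of (root_coords v)) = -3"
    using herm_vec_of_eq[of _ _ "-3" 0] root_coords_norm[OF assms] by (simp add: eis_def)
  ultimately show ?thesis
    by (simp add: is_root_def)
qed

lemma herm_root_coords:
  assumes "v \<in> D_vertices" "w \<in> D_vertices" "herm3 (root_coords v) (root_coords w) = (3 * x, 3 * y)"
  shows "herm (vec_of (root_coords v)) (vec_of (root_coords w)) = eis (x, y)"
  using herm_vec_of_eq root_coords_norm(1) assms by blast

lemma D_config_conf: "D_config conf_x conf_l"
  unfolding D_config_def
proof (intro conjI ballI impI)
  fix p m assume pm: "p \<in> P2" "m \<in> P2"
  then have V: "Inl p \<in> D_vertices" "Inr p \<in> D_vertices" "Inl m \<in> D_vertices" "Inr m \<in> D_vertices"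
    by (simp_all add: D_vertices_def)
  show "is_root (conf_x p)" "is_root (conf_l p)"
    using is_root_root_coords V by (simp_all add: conf_x_def conf_l_def)
  have "herm3 (root_coords (Inl p)) (root_coords (Inr m)) = (if incident p m then (6, 3) else (0, 0))"
    using tables_gram(3) root_coords_tables pm by blast
  then have "herm (conf_x p) (conf_l m) = (if incident p m then eis (2, 1) else eis (0, 0))"
    unfolding conf_x_def conf_l_def using herm_root_coords[OF V(1,4), of 2 1] herm_root_coords[OF V(1,4), of 0 0]
    by simp
  moreover have "- omega * theta = eis (0, -1) * eis (1, 2)"
    by (simp add: theta_eis eis_def)
  ultimately show "herm (conf_x p) (conf_l m) = (if incident p m then - omega * theta else 0)"
    by (simp add: eis_mult) (simp add: eis_def)
  assume "p \<noteq> m"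
  then have "herm3 (root_coords (Inl p)) (root_coords (Inl m)) = (0, 0)"
      "herm3 (root_coords (Inr p)) (root_coords (Inr m)) = (0, 0)"
    using tables_gram(1,2) root_coords_tables pm by blast+
  then show "herm (conf_x p) (conf_x m) = 0" "herm (conf_l p) (conf_l m) = 0"
    unfolding conf_x_def conf_l_def using herm_root_coords[of _ _ 0 0] V by (simp_all add: eis_def)
qed

lemma tree_subset: "set tree \<subseteq> D_vertices"
  using tree_m666 by (simp add: D_vertices_def P2_eq)

lemma bij_betw_tree: "bij_betw ((!) tree) {0..<16} (set tree)"
  using tree_m666 by (intro bij_betw_nth) auto

lemma tree_adj: "\<forall>i\<in>{0..<16}. \<forall>j\<in>{0..<16}. m666_adj i j \<longleftrightarrow> inc_adj (tree ! i) (tree ! j)"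
  using tree_m666 unfolding set_upt by blast

lemma conf_roots_derived:
  "D_root conf_x conf_l ` D_vertices \<subseteq> derived_roots (D_root conf_x conf_l ` set tree)"
proof -
  let ?root = "\<lambda>v. vec_of (root_coords v)"
  have "\<forall>r\<in>?root ` set tree. herm r r \<noteq> 0"
    using is_root_root_coords tree_subset by (force simp: is_root_def)
  then have known: "\<forall>v\<in>set tree. ?root v \<in> derived_roots (?root ` set tree)"
    using subset_derived_roots by blast
  have derived: "\<forall>d\<in>set derivations. ?root (fst d) \<in> derived_roots (?root ` set tree)"
    using derivation_ok_derived[OF _ known] derivations_cover by blast
  have "D_vertices \<subseteq> set tree \<union> fst ` set derivations"
    using derivations_cover by (simp add: D_vertices_def P2_eq)
  with known derived show ?thesis
    unfolding D_root_conf by blast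
qed

theorem mainTheorem10:
  shows "\<exists>x l S. D_config x l \<and> S \<subseteq> D_vertices \<and> card S = 16 \<and>
     (\<exists>f. bij_betw f {0..<16} S \<and>
          (\<forall>i\<in>{0..<16}. \<forall>j\<in>{0..<16}. m666_adj i j \<longleftrightarrow> inc_adj (f i) (f j))) \<and>
     eq_up_to_units (rad (D_root x l ` S)) (rad (D_root x l ` D_vertices)) \<and>
     refl_group (D_root x l ` S) = refl_group (D_root x l ` D_vertices)"
proof (intro exI conjI)
  show "D_config conf_x conf_l"
    by (rule D_config_conf)
  show "set tree \<subseteq> D_vertices" "bij_betw ((!) tree) {0..<16} (set tree)"
    "\<forall>i\<in>{0..<16}. \<forall>j\<in>{0..<16}. m666_adj i j \<longleftrightarrow> inc_adj (tree ! i) (tree ! j)"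
    by (rule tree_subset bij_betw_tree tree_adj)+
  then show "card (set tree) = 16"
    by (simp add: bij_betw_same_card[symmetric])
  have sub: "D_root conf_x conf_l ` set tree \<subseteq> D_root conf_x conf_l ` D_vertices"
    using tree_subset by blast
  note derived = conf_roots_derived
  show "eq_up_to_units (rad (D_root conf_x conf_l ` set tree)) (rad (D_root conf_x conf_l ` D_vertices))"
    using derived by (intro eq_up_to_units_rad[OF sub]) (auto simp: derived_roots_def)
  show "refl_group (D_root conf_x conf_l ` set tree) = refl_group (D_root conf_x conf_l ` D_vertices)"
    by (rule refl_group_eq[OF sub derived])
qed

end
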